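(* Consider a persuasion instance in the public mode, and fix a representative set $\bar{\mathcal A}$. For every stable public policy $\sigma:\Omega\to\Delta(\mathcal A\times G)$ there exists a stable public policy $\bar\sigma:\Omega\to\Delta(C)$, where $$C=\{(\bar{\mathbf a},\beta):\bar{\mathbf a}\in\bar{\mathcal A},\ \beta\in B^{\mathrm{pub}}_{\rho_{\bar{\mathbf a}}}\},$$ such that $u_0(\bar\sigma)\ge u_0(\sigma)$. Here a meta-signal $c=(\bar{\mathbf a},\beta)\in C$ recommends the joint action $\bar{\mathbf a}$ and carries $\beta$ as its additional (publicly observed) information. Moreover, for every $c\in C$ sent by $\bar\sigma$ with positive probability, the public signature of $c$ (under $\bar\sigma$) is exactly $c$.
   Context: A persuasion instance consists of: a finite set $\Omega$ of worlds; a prior $\mu\in\Delta(\Omega)$; agents $N=\{1,\dots,n\}$; a finite action set $A$; a partition $\mathcal T$ of $N$ into nonempty sets called types; for each $T\in\mathcal T$ a utility $u_T(a,\rho\mid\omega)\in\mathbb R$ defined for $a\in A$, action profiles $\rho$, and $\omega\in\Omega$; a principal utility $u_0(\rho\mid\omega)\in\mathbb R$; and an integer $d\ge 1$ (maximum coalition size). Joint actions are $\mathbf a\in\mathcal A=A^n$; the action profile of $\mathbf a$ is $\rho_{\mathbf a}:\mathcal T\times A\to\mathbb Z_{\ge0}$, $\rho_{\mathbf a}(T,a)=|\{i\in T:a_i=a\}|$. For $i\in T$, $u_i(\mathbf a\mid\omega)=u_T(a_i,\rho_{\mathbf a}\mid\omega)$; for $p\in\Delta(\Omega)$ write $u(\cdot\mid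 p)=\mathbb E_{\omega\sim p}u(\cdot\mid\omega)$. A policy is a map $\sigma:\Omega\to\Delta(\mathcal A\times G)$ (finitely supported distributions), where $G$ is a set of tuples $\mathbf g=(g_i)_{i\in N}$; elements $s=(\mathbf a,\mathbf g)$ are meta-signals. The part $s_i$ of $s$ observed by agent $i$ is $s_i=(\mathbf a,\mathbf g)$ in the public mode, $s_i=(\mathbf a,g_i)$ in the semi-private mode, and $s_i=(a_i,g_i)$ in the private mode. Agent $i$'s posterior upon observing $s_i$ is $\Pr(\tilde{\mathbf a},\omega\mid s_i)=\mu(\omega)\,\sigma(\{s'=(\tilde{\mathbf a},\mathbf g'):s'_i=s_i\}\mid\omega)\big/\sum_{\omega'}\mu(\omega')\,\sigma(\{s':s'_i=s_i\}\mid\omega')$. A meta-signal $s$ is unstable if there exist a nonempty $N'\subseteq N$ with $|N'|\le d$ and actions $(a'_i)_{i\in N'}$ such that for every $i\in N'$: $\sum_{\tilde{\mathbf a},\omega}\Pr(\tilde{\mathbf a},\omega\mid s_i)\,\big(u_i(\tilde{\mathbf a}\oplus\mathbf a'\mid\omega)-u_i(\tilde{\mathbf a}\mid\omega)\big)>0$, where $\tilde{\mathbf a}\oplus\mathbf a'$ replaces $\tilde a_i$ by $a'_i$ for all $i\in N'$; otherwise $s$ is stable. A policy is stable if every meta-signal it sends with positive probability is stable. The principal's utility is $u_0(\sigma)=\sum_\omega\mu(\omega)\sum_{(\mathbf a,\mathbf g)}\sigma((\mathbf a,\mathbf g)\mid\omega)\,u_0(\rho_{\mathbf a}\mid\omega)$.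 A representative set $\bar{\mathcal A}\subseteq\mathcal A$ contains, for each action profile $\rho$ realizable by some joint action, exactly one $\bar{\mathbf a}$ with $\rho_{\bar{\mathbf a}}=\rho$; $\bar{\mathbf a}$ is the representative of every $\mathbf a$ with $\rho_{\mathbf a}=\rho$. Deviations: $D_*$ is the set of functions $\delta:\mathcal T\times A\times A\to\mathbb Z_{\ge0}$ with $1\le\sum_{T,a,a'}\delta(T,a,a')\le d$ and $\delta(T,a,a)=0$ for all $T,a$; for a profile $\rho$, $D_\rho=\{\delta\in D_*:\sum_{a'}\delta(T,a,a')\le\rho(T,a)\ \forall T,a\}$; and $(\rho\oplus\delta)(T,a)=\rho(T,a)-\sum_{a'}\delta(T,a,a')+\sum_{a''}\delta(T,a'',a)$. The public blocking profile of a meta-signal $s=(\mathbf a,\mathbf g)$ with posterior $p_s=\Pr(\cdot\mid s)\in\Delta(\Omega)$ is $\beta=\{(\delta,T,a,a')\in D_{\rho_{\mathbf a}}\times\mathcal T\times A^2:\delta(T,a,a')>0,\ u_T(a,\rho_{\mathbf a}\mid p_s)\ge u_T(a',\rho_{\mathbf a}\oplus\delta\mid p_s)\}$. $B^{\mathrm{pub}}_\rho$ is the set of all subsets $\beta\subseteq D_\rho\times\mathcal T\times A^2$ such that every $(\delta,T,a,a')\in\beta$ has $\delta(T,a,a')>0$ and, for every $\delta\in D_\rho$, some element of $\beta$ has first coordinate $\delta$. The public signature of $s=(\mathbf a,\mathbf g)$ is $(\bar{\mathbf a},\beta)$ where $\bar{\mathbf a}$ is the representative of $\mathbf a$ and $\beta$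 is the public blocking profile of $s$. *)

theory Defs
  imports "HOL-Probability.Probability_Mass_Function"
begin

(* Agents are 0,...,n-1; a joint action is a list of length n (entry i = action of agent i).
   Types are sets of agents (elements of the partition Ts).  Worlds form a finite type 'w,
   actions a finite type 'a (so Omega = UNIV, A = UNIV). *)

type_synonym 'a prof = "nat set \<Rightarrow> 'a \<Rightarrow> nat"
type_synonym 'a dev = "nat set \<Rightarrow> 'a \<Rightarrow> 'a \<Rightarrow> nat"

definition joint :: "nat \<Rightarrow> 'a list set" where
  "joint n = {xs. length xs = n}"

definition is_partition :: "nat \<Rightarrow> nat set set \<Rightarrow> bool" where
  "is_partition n Ts \<longleftrightarrow> (\<forall>T\<in>Ts. T \<noteq> {}) \<and> \<Union>Ts = {..<n}
     \<and> (\<forall>T\<in>Ts. \<forall>T'\<in>Ts. T \<noteq> T' \<longrightarrow> T \<inter> T' = {})"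

definition typ_of :: "nat set set \<Rightarrow> nat \<Rightarrow> nat set" where
  "typ_of Ts i = (THE T. T \<in> Ts \<and> i \<in> T)"

definition profile :: "nat set set \<Rightarrow> 'a list \<Rightarrow> 'a prof" where
  "profile Ts xs = (\<lambda>T a. if T \<in> Ts then card {i \<in> T. i < length xs \<and> xs ! i = a} else 0)"

definition agent_util :: "nat set set \<Rightarrow> (nat set \<Rightarrow> 'a \<Rightarrow> 'a prof \<Rightarrow> 'w \<Rightarrow> real)
    \<Rightarrow> 'a list \<Rightarrow> nat \<Rightarrow> 'w \<Rightarrow> real" where
  "agent_util Ts u xs i \<omega> = u (typ_of Ts i) (xs ! i) (profile Ts xs) \<omega>"

text \<open>A policy: finitely supported distribution over meta-signals (joint action, extra info).\<close>
definition is_policy :: "nat \<Rightarrow> ('w \<Rightarrow> ('a list \<times> 'g) pmf) \<Rightarrow> bool" where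
  "is_policy n \<sigma> \<longleftrightarrow> (\<forall>\<omega>. finite (set_pmf (\<sigma> \<omega>)) \<and> fst ` set_pmf (\<sigma> \<omega>) \<subseteq> joint n)"

definition sig_prob :: "'w::finite pmf \<Rightarrow> ('w \<Rightarrow> 's pmf) \<Rightarrow> 's \<Rightarrow> real" where
  "sig_prob \<mu> \<sigma> s = (\<Sum>\<omega>\<in>UNIV. pmf \<mu> \<omega> * pmf (\<sigma> \<omega>) s)"

text \<open>Posterior Pr(a~, omega | s_i) in the public mode (s_i = s).\<close>
definition post_pub :: "'w::finite pmf \<Rightarrow> ('w \<Rightarrow> ('a list \<times> 'g) pmf) \<Rightarrow> ('a list \<times> 'g)
    \<Rightarrow> 'a list \<Rightarrow> 'w \<Rightarrow> real" where
  "post_pub \<mu> \<sigma> s xt \<omega> =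
     pmf \<mu> \<omega> * measure_pmf.prob (\<sigma> \<omega>) {s'. fst s' = xt \<and> s' = s} / sig_prob \<mu> \<sigma> s"

definition post_world :: "'w::finite pmf \<Rightarrow> ('w \<Rightarrow> 's pmf) \<Rightarrow> 's \<Rightarrow> 'w \<Rightarrow> real" where
  "post_world \<mu> \<sigma> s \<omega> = pmf \<mu> \<omega> * pmf (\<sigma> \<omega>) s / sig_prob \<mu> \<sigma> s"

definition upd :: "'a list \<Rightarrow> nat set \<Rightarrow> (nat \<Rightarrow> 'a) \<Rightarrow> 'a list" where
  "upd xs N' a' = map (\<lambda>i. if i \<in> N' then a' i else xs ! i) [0..<length xs]"

definition unstable_pub :: "nat \<Rightarrow> nat set set \<Rightarrow> (nat set \<Rightarrow> 'a \<Rightarrow> 'a prof \<Rightarrow> 'w \<Rightarrow> real)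
    \<Rightarrow> 'w::finite pmf \<Rightarrow> nat \<Rightarrow> ('w \<Rightarrow> ('a list \<times> 'g) pmf) \<Rightarrow> ('a list \<times> 'g) \<Rightarrow> bool" where
  "unstable_pub n Ts u \<mu> d \<sigma> s \<longleftrightarrow>
     (\<exists>N' a'. N' \<noteq> {} \<and> N' \<subseteq> {..<n} \<and> card N' \<le> d \<and>
        (\<forall>i\<in>N'. (\<Sum>xt\<in>joint n. \<Sum>\<omega>\<in>UNIV. post_pub \<mu> \<sigma> s xt \<omega> *
              (agent_util Ts u (upd xt N' a') i \<omega> - agent_util Ts u xt i \<omega>)) > 0))"

definition stable_pub_policy :: "nat \<Rightarrow> nat set set \<Rightarrow> (nat set \<Rightarrow> 'a \<Rightarrow> 'a prof \<Rightarrow> 'w \<Rightarrow> real)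
    \<Rightarrow> 'w::finite pmf \<Rightarrow> nat \<Rightarrow> ('w \<Rightarrow> ('a list \<times> 'g) pmf) \<Rightarrow> bool" where
  "stable_pub_policy n Ts u \<mu> d \<sigma> \<longleftrightarrow> is_policy n \<sigma> \<and>
     (\<forall>s. sig_prob \<mu> \<sigma> s > 0 \<longrightarrow> \<not> unstable_pub n Ts u \<mu> d \<sigma> s)"

definition principal_util :: "nat set set \<Rightarrow> ('a prof \<Rightarrow> 'w \<Rightarrow> real) \<Rightarrow> 'w::finite pmf
    \<Rightarrow> ('w \<Rightarrow> ('a list \<times> 'g) pmf) \<Rightarrow> real" where
  "principal_util Ts u0 \<mu> \<sigma> =
     (\<Sum>\<omega>\<in>UNIV. pmf \<mu> \<omega> * (\<Sum>s\<in>set_pmf (\<sigma> \<omega>). pmf (\<sigma> \<omega>) s * u0 (profile Ts (fst s)) \<omega>))"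

definition is_rep_set :: "nat \<Rightarrow> nat set set \<Rightarrow> 'a list set \<Rightarrow> bool" where
  "is_rep_set n Ts Abar \<longleftrightarrow> Abar \<subseteq> joint n \<and>
     (\<forall>xs\<in>joint n. \<exists>!ab. ab \<in> Abar \<and> profile Ts ab = profile Ts xs)"

definition rep_of :: "nat set set \<Rightarrow> 'a list set \<Rightarrow> 'a list \<Rightarrow> 'a list" where
  "rep_of Ts Abar xs = (THE ab. ab \<in> Abar \<and> profile Ts ab = profile Ts xs)"

definition dev_size :: "nat set set \<Rightarrow> 'a::finite dev \<Rightarrow> nat" where
  "dev_size Ts \<delta> = (\<Sum>T\<in>Ts. \<Sum>a\<in>UNIV. \<Sum>a'\<in>UNIV. \<delta> T a a')"

definition D_star :: "nat set set \<Rightarrow> nat \<Rightarrow> 'a::finite dev set" where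
  "D_star Ts d = {\<delta>. (\<forall>T a a'. T \<notin> Ts \<longrightarrow> \<delta> T a a' = 0) \<and> (\<forall>T a. \<delta> T a a = 0)
      \<and> 1 \<le> dev_size Ts \<delta> \<and> dev_size Ts \<delta> \<le> d}"

definition D_rho :: "nat set set \<Rightarrow> nat \<Rightarrow> 'a::finite prof \<Rightarrow> 'a dev set" where
  "D_rho Ts d \<rho> = {\<delta> \<in> D_star Ts d. \<forall>T\<in>Ts. \<forall>a. (\<Sum>a'\<in>UNIV. \<delta> T a a') \<le> \<rho> T a}"

definition prof_plus :: "'a::finite prof \<Rightarrow> 'a dev \<Rightarrow> 'a prof" where
  "prof_plus \<rho> \<delta> = (\<lambda>T a. \<rho> T a + (\<Sum>a''\<in>UNIV. \<delta> T a'' a) - (\<Sum>a'\<in>UNIV. \<delta> T a a'))"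

definition type_util :: "(nat set \<Rightarrow> 'a \<Rightarrow> 'a prof \<Rightarrow> 'w \<Rightarrow> real) \<Rightarrow> nat set \<Rightarrow> 'a \<Rightarrow> 'a prof
    \<Rightarrow> ('w::finite \<Rightarrow> real) \<Rightarrow> real" where
  "type_util u T a \<rho> p = (\<Sum>\<omega>\<in>UNIV. p \<omega> * u T a \<rho> \<omega>)"

definition blocking_pub :: "nat set set \<Rightarrow> (nat set \<Rightarrow> 'a::finite \<Rightarrow> 'a prof \<Rightarrow> 'w \<Rightarrow> real)
    \<Rightarrow> 'w::finite pmf \<Rightarrow> nat \<Rightarrow> ('w \<Rightarrow> ('a list \<times> 'g) pmf) \<Rightarrow> ('a list \<times> 'g)
    \<Rightarrow> ('a dev \<times> nat set \<times> 'a \<times> 'a) set" where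
  "blocking_pub Ts u \<mu> d \<sigma> s =
     (let \<rho> = profile Ts (fst s); p = post_world \<mu> \<sigma> s in
      {(\<delta>, T, a, a'). \<delta> \<in> D_rho Ts d \<rho> \<and> T \<in> Ts \<and> \<delta> T a a' > 0 \<and>
         type_util u T a \<rho> p \<ge> type_util u T a' (prof_plus \<rho> \<delta>) p})"

definition B_pub :: "nat set set \<Rightarrow> nat \<Rightarrow> 'a::finite prof \<Rightarrow> ('a dev \<times> nat set \<times> 'a \<times> 'a) set set" where
  "B_pub Ts d \<rho> = {\<beta>. \<beta> \<subseteq> D_rho Ts d \<rho> \<times> Ts \<times> UNIV \<times> UNIV \<and>
      (\<forall>(\<delta>, T, a, a')\<in>\<beta>. \<delta> T a a' > 0) \<and>
      (\<forall>\<delta>\<in>D_rho Ts d \<rho>. \<exists>x\<in>\<beta>. fst x = \<delta>)}"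

definition signature_pub :: "nat set set \<Rightarrow> (nat set \<Rightarrow> 'a::finite \<Rightarrow> 'a prof \<Rightarrow> 'w \<Rightarrow> real)
    \<Rightarrow> 'w::finite pmf \<Rightarrow> nat \<Rightarrow> 'a list set \<Rightarrow> ('w \<Rightarrow> ('a list \<times> 'g) pmf) \<Rightarrow> ('a list \<times> 'g)
    \<Rightarrow> 'a list \<times> ('a dev \<times> nat set \<times> 'a \<times> 'a) set" where
  "signature_pub Ts u \<mu> d Abar \<sigma> s = (rep_of Ts Abar (fst s), blocking_pub Ts u \<mu> d \<sigma> s)"

definition C_set :: "nat set set \<Rightarrow> nat \<Rightarrow> 'a::finite list set
    \<Rightarrow> ('a list \<times> ('a dev \<times> nat set \<times> 'a \<times> 'a) set) set" where
  "C_set Ts d Abar = {(ab, \<beta>). ab \<in> Abar \<and> \<beta> \<in> B_pub Ts d (profile Ts ab)}"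

end

theory Submission
  imports Defs
begin

(* A deviation of a coalition of at most d agents from the recommended joint action x is
   described by the aggregate deviation delta in D_rho that counts, per type, who switches from
   which action to which; every delta in D_rho arises from such a coalition, and a deviator's gain
   depends only on her type, her two actions and the profiles rho and rho (+) delta.  Hence a
   public meta-signal is stable iff every delta in D_rho contains a move that is blocked under
   its posterior, i.e. iff its public blocking profile lies in B_pub.

   Replacing each meta-signal of a stable policy by its public signature merges signals with the
   same representative and the same blocking profile.  The posterior of a merged signal is a
   mixture of the posteriors of the signals it merges, and "the move (T, a, a') is blocked" is a
   linear inequality in the posterior, so the merged signal has the very same blocking profile.
   Hence the new policy is stable, each of its signals is its own signature, and since the
   action profile is unchanged so is the principal's utility. *)

section \<open>Partitions and action profiles\<close>

lemma is_partition_finite: "is_partition n Ts \<Longrightarrow> finite Ts"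
  by (rule finite_subset[of _ "Pow {..<n}"]) (auto simp: is_partition_def)

lemma is_partition_subset: "is_partition n Ts \<Longrightarrow> T \<in> Ts \<Longrightarrow> T \<subseteq> {..<n}"
  unfolding is_partition_def by auto

lemma is_partition_finite_block: "is_partition n Ts \<Longrightarrow> T \<in> Ts \<Longrightarrow> finite T"
  by (meson is_partition_subset finite_lessThan finite_subset)

lemma typ_of_eq: "is_partition n Ts \<Longrightarrow> T \<in> Ts \<Longrightarrow> i \<in> T \<Longrightarrow> typ_of Ts i = T"
  unfolding typ_of_def is_partition_def by (rule the_equality) blast+

lemma typ_of_mem:
  assumes part: "is_partition n Ts" and "i < n"
  shows "typ_of Ts i \<in> Ts \<and> i \<in> typ_of Ts i"
proof -
  obtain T where "T \<in> Ts" "i \<in> T"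
    using part \<open>i < n\<close> unfolding is_partition_def by blast
  then show ?thesis using typ_of_eq[OF part] by simp
qed

lemma profile_block:
  "is_partition n Ts \<Longrightarrow> T \<in> Ts \<Longrightarrow> length x = n \<Longrightarrow> profile Ts x T a = card {i \<in> T. x ! i = a}"
  unfolding profile_def by (auto dest: is_partition_subset intro!: arg_cong[where f = card])

lemma sum_card_fibres:
  fixes f :: "'i \<Rightarrow> 'a::finite"
  assumes "finite A"
  shows "(\<Sum>c\<in>UNIV. card {i \<in> A. P i \<and> f i = c}) = card {i \<in> A. P i}"
proof -
  have "card {i \<in> A. P i} = card (\<Union>c. {i \<in> A. P i \<and> f i = c})"
    by (rule arg_cong[where f = card]) auto
  also have "\<dots> = (\<Sum>c\<in>UNIV. card {i \<in> A. P i \<and> f i = c})"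
    by (rule card_UN_disjoint) (use assms in auto)
  finally show ?thesis ..
qed

lemma sum_card_fibres_all:
  fixes f :: "'i \<Rightarrow> 'a::finite"
  shows "finite A \<Longrightarrow> (\<Sum>c\<in>UNIV. card {i \<in> A. f i = c}) = card A"
  using sum_card_fibres[of A "\<lambda>_. True" f] by simp

lemma length_upd [simp]: "length (upd xs N' a') = length xs"
  unfolding upd_def by simp

lemma nth_upd: "i < length xs \<Longrightarrow> upd xs N' a' ! i = (if i \<in> N' then a' i else xs ! i)"
  unfolding upd_def by simp

section \<open>Coalition deviations\<close>

definition coalition_dev :: "nat set set \<Rightarrow> 'a list \<Rightarrow> nat set \<Rightarrow> (nat \<Rightarrow> 'a) \<Rightarrow> 'a dev" where
  "coalition_dev Ts x N' a' =
     (\<lambda>T a b. if T \<in> Ts then card {i \<in> N' \<inter> T. x ! i = a \<and> a' i = b} else 0)"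

lemma coalition_dev_pos_iff:
  assumes "is_partition n Ts"
  shows "0 < coalition_dev Ts x N' a' T a b \<longleftrightarrow> T \<in> Ts \<and> (\<exists>i\<in>N' \<inter> T. x ! i = a \<and> a' i = b)"
  using is_partition_finite_block[OF assms] by (auto simp: coalition_dev_def card_gt_0_iff)

lemma profile_upd:
  fixes x :: "'a::finite list"
  assumes part: "is_partition n Ts" and len: "length x = n"
  shows "profile Ts (upd x N' a') = prof_plus (profile Ts x) (coalition_dev Ts x N' a')"
proof (intro ext)
  fix T b
  show "profile Ts (upd x N' a') T b = prof_plus (profile Ts x) (coalition_dev Ts x N' a') T b"
  proof (cases "T \<in> Ts")
    case False
    then show ?thesis by (simp add: profile_def prof_plus_def coalition_dev_def)
  next
    case T: True
    have fin: "finite T" and sub: "T \<subseteq> {..<n}"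
      using is_partition_finite_block[OF part T] is_partition_subset[OF part T] .
    define Stay where "Stay = {i \<in> T - N'. x ! i = b}"
    define In where "In = {i \<in> N' \<inter> T. a' i = b}"
    define Out where "Out = {i \<in> N' \<inter> T. x ! i = b}"
    have "\<forall>i\<in>T. upd x N' a' ! i = (if i \<in> N' then a' i else x ! i)"
      using sub len by (auto simp: nth_upd)
    then have "{i \<in> T. upd x N' a' ! i = b} = Stay \<union> In"
      by (auto simp: Stay_def In_def)
    moreover have "card (Stay \<union> In) = card Stay + card In"
      using fin by (intro card_Un_disjoint) (auto simp: Stay_def In_def)
    ultimately have new: "profile Ts (upd x N' a') T b = card Stay + card In"
      using profile_block[OF part T, of "upd x N' a'"] len by simp
    have "{i \<in> T. x ! i = b} = Stay \<union> Out"
      by (auto simp: Stay_def Out_def)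
    moreover have "card (Stay \<union> Out) = card Stay + card Out"
      using fin by (intro card_Un_disjoint) (auto simp: Stay_def Out_def)
    ultimately have old: "profile Ts x T b = card Stay + card Out"
      using profile_block[OF part T len] by simp
    have "(\<Sum>c\<in>UNIV. coalition_dev Ts x N' a' T c b) = card In"
      using sum_card_fibres[of "N' \<inter> T" "\<lambda>i. a' i = b" "(!) x"] fin
      by (simp add: coalition_dev_def T In_def conj_commute)
    moreover have "(\<Sum>c\<in>UNIV. coalition_dev Ts x N' a' T b c) = card Out"
      using sum_card_fibres[of "N' \<inter> T" "\<lambda>i. x ! i = b" a'] fin
      by (simp add: coalition_dev_def T Out_def)
    ultimately show ?thesis
      using new old by (simp add: prof_plus_def)
  qed
qed

lemma dev_size_coalition_dev:
  fixes x :: "'a::finite list"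
  assumes part: "is_partition n Ts" and sub: "N' \<subseteq> {..<n}"
  shows "dev_size Ts (coalition_dev Ts x N' a') = card N'"
proof -
  have block: "(\<Sum>a\<in>UNIV. \<Sum>b\<in>UNIV. coalition_dev Ts x N' a' T a b) = card (N' \<inter> T)"
    if T: "T \<in> Ts" for T
  proof -
    have fin: "finite (N' \<inter> T)"
      using is_partition_finite_block[OF part T] by simp
    have "(\<Sum>a\<in>UNIV. \<Sum>b\<in>UNIV. coalition_dev Ts x N' a' T a b)
        = (\<Sum>a\<in>UNIV. card {i \<in> N' \<inter> T. x ! i = a})"
      unfolding coalition_dev_def using T by (simp only: if_True) (rule sum.cong[OF refl], rule sum_card_fibres[OF fin])
    also have "\<dots> = card (N' \<inter> T)"
      by (rule sum_card_fibres_all[OF fin])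
    finally show ?thesis .
  qed
  have "dev_size Ts (coalition_dev Ts x N' a') = (\<Sum>T\<in>Ts. card (N' \<inter> T))"
    unfolding dev_size_def by (intro sum.cong refl block)
  also have "\<dots> = card (\<Union>T\<in>Ts. N' \<inter> T)"
  proof (rule card_UN_disjoint[symmetric])
    show "\<forall>T\<in>Ts. \<forall>T'\<in>Ts. T \<noteq> T' \<longrightarrow> N' \<inter> T \<inter> (N' \<inter> T') = {}"
      using part unfolding is_partition_def by blast
  qed (use is_partition_finite[OF part] is_partition_finite_block[OF part] in auto)
  also have "(\<Union>T\<in>Ts. N' \<inter> T) = N'"
    using part sub by (auto simp: is_partition_def)
  finally show ?thesis .
qed

lemma coalition_dev_in_D_rho:
  fixes x :: "'a::finite list"
  assumes part: "is_partition n Ts" and len: "length x = n" and sub: "N' \<subseteq> {..<n}"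
    and changes: "\<forall>i\<in>N'. a' i \<noteq> x ! i" and "N' \<noteq> {}" and "card N' \<le> d"
  shows "coalition_dev Ts x N' a' \<in> D_rho Ts d (profile Ts x)"
proof -
  have "1 \<le> card N'"
    using \<open>N' \<noteq> {}\<close> sub finite_subset by (fastforce simp: Suc_le_eq card_gt_0_iff)
  moreover have "coalition_dev Ts x N' a' T a a = 0" for T a
  proof -
    have none: "{i \<in> N' \<inter> T. x ! i = a \<and> a' i = a} = {}" using changes by auto
    show ?thesis unfolding coalition_dev_def none by simp
  qed
  moreover have "(\<Sum>b\<in>UNIV. coalition_dev Ts x N' a' T a b) \<le> profile Ts x T a" if T: "T \<in> Ts" for T a
  proof -
    have fin: "finite T" using is_partition_finite_block[OF part T] .
    have "(\<Sum>b\<in>UNIV. coalition_dev Ts x N' a' T a b) = card {i \<in> N' \<inter> T. x ! i = a}"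
      using sum_card_fibres[of "N' \<inter> T" "\<lambda>i. x ! i = a" a'] fin by (simp add: coalition_dev_def T)
    also have "\<dots> \<le> card {i \<in> T. x ! i = a}"
      using fin by (intro card_mono) auto
    finally show ?thesis using profile_block[OF part T len] by simp
  qed
  moreover have "coalition_dev Ts x N' a' T a b = 0" if "T \<notin> Ts" for T a b
    using that by (simp add: coalition_dev_def)
  ultimately show ?thesis
    using dev_size_coalition_dev[OF part sub, of x a'] \<open>card N' \<le> d\<close>
    unfolding D_rho_def D_star_def by auto
qed

lemma exists_partial_map_with_fibre_cards:
  fixes k :: "'b \<Rightarrow> nat"
  assumes "finite B" and "finite A" and "(\<Sum>b\<in>B. k b) \<le> card A"
  shows "\<exists>f. (\<forall>i. f i \<noteq> None \<longrightarrow> i \<in> A \<and> the (f i) \<in> B) \<and> (\<forall>b\<in>B. card {i \<in> A. f i = Some b} = k b)"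
  using assms
proof (induction B arbitrary: A rule: finite_induct)
  case empty
  show ?case by (rule exI[of _ "\<lambda>_. None"]) simp
next
  case (insert b B)
  have "k b \<le> card A" using insert by simp
  then obtain S where S: "S \<subseteq> A" "card S = k b" "finite S"
    by (rule obtain_subset_with_card_n)
  have "(\<Sum>b\<in>B. k b) \<le> card (A - S)"
    using insert S by (simp add: card_Diff_subset)
  then obtain f where f_dom: "\<forall>i. f i \<noteq> None \<longrightarrow> i \<in> A - S \<and> the (f i) \<in> B"
    and f_card: "\<forall>b\<in>B. card {i \<in> A - S. f i = Some b} = k b"
    using insert by blast
  define g where "g = (\<lambda>i. if i \<in> S then Some b else f i)"
  have "{i \<in> A. g i = Some b} = S"
    using S f_dom insert.hyps(2) by (force simp: g_def)
  moreover have "{i \<in> A. g i = Some c} = {i \<in> A - S. f i = Some c}" if "c \<in> B" for c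
    using that insert.hyps(2) by (auto simp: g_def)
  ultimately show ?case
    using f_dom f_card S by (intro exI[of _ g]) (auto simp: g_def)
qed

lemma D_rho_block_reassignment:
  fixes x :: "'a::finite list"
  assumes part: "is_partition n Ts" and len: "length x = n"
    and \<delta>: "\<delta> \<in> D_rho Ts d (profile Ts x)" and T: "T \<in> Ts"
  shows "\<exists>f. \<forall>b. card {i \<in> T. x ! i = a \<and> f i = Some b} = \<delta> T a b"
proof -
  have "(\<Sum>b\<in>UNIV. \<delta> T a b) \<le> profile Ts x T a"
    using \<delta> T by (simp add: D_rho_def)
  also have "\<dots> = card {j \<in> T. x ! j = a}"
    by (rule profile_block[OF part T len])
  finally obtain f where "\<forall>b. card {i \<in> {j \<in> T. x ! j = a}. f i = Some b} = \<delta> T a b"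
    using exists_partial_map_with_fibre_cards[of UNIV "{j \<in> T. x ! j = a}" "\<delta> T a"]
      is_partition_finite_block[OF part T] by auto
  moreover have "{i \<in> {j \<in> T. x ! j = a}. f i = Some b} = {i \<in> T. x ! i = a \<and> f i = Some b}" for b
    by auto
  ultimately show ?thesis by auto
qed

lemma D_rho_realised_by_coalition:
  fixes x :: "'a::finite list"
  assumes part: "is_partition n Ts" and len: "length x = n"
    and \<delta>: "\<delta> \<in> D_rho Ts d (profile Ts x)"
  shows "\<exists>N' a'. N' \<subseteq> {..<n} \<and> (\<forall>i\<in>N'. a' i \<noteq> x ! i) \<and> coalition_dev Ts x N' a' = \<delta>"
proof -
  have "\<forall>T a. \<exists>f. T \<in> Ts \<longrightarrow> (\<forall>b. card {i \<in> T. x ! i = a \<and> f i = Some b} = \<delta> T a b)"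
    using D_rho_block_reassignment[OF part len \<delta>] by blast
  then obtain G where G_card: "\<And>T a b. T \<in> Ts \<Longrightarrow> card {i \<in> T. x ! i = a \<and> G T a i = Some b} = \<delta> T a b"
    unfolding choice_iff by blast
  define N' where "N' = {i. i < n \<and> G (typ_of Ts i) (x ! i) i \<noteq> None}"
  define a' where "a' = (\<lambda>i. the (G (typ_of Ts i) (x ! i) i))"
  have dev_set: "{i \<in> N' \<inter> T. x ! i = a \<and> a' i = b} = {i \<in> T. x ! i = a \<and> G T a i = Some b}"
    if T: "T \<in> Ts" for T a b
    using typ_of_eq[OF part T] is_partition_subset[OF part T]
    by (auto simp: N'_def a'_def)
  have "\<delta> \<in> D_star Ts d" using \<delta> by (simp add: D_rho_def)
  have "coalition_dev Ts x N' a' T a b = \<delta> T a b" for T a b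
  proof (cases "T \<in> Ts")
    case True
    then show ?thesis unfolding coalition_dev_def dev_set[OF True] G_card[OF True] by simp
  next
    case False
    then show ?thesis using \<open>\<delta> \<in> D_star Ts d\<close> by (simp add: coalition_dev_def D_star_def)
  qed
  then have "coalition_dev Ts x N' a' = \<delta>" by blast
  moreover have "a' i \<noteq> x ! i" if i: "i \<in> N'" for i
  proof
    assume "a' i = x ! i"
    define T where "T = typ_of Ts i"
    have T: "T \<in> Ts" "i \<in> T" using i typ_of_mem[OF part] by (auto simp: N'_def T_def)
    then have "0 < coalition_dev Ts x N' a' T (x ! i) (x ! i)"
      unfolding coalition_dev_pos_iff[OF part] using i T \<open>a' i = x ! i\<close> by auto
    then show False
      using \<open>coalition_dev Ts x N' a' = \<delta>\<close> \<open>\<delta> \<in> D_star Ts d\<close> by (simp add: D_star_def)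
  qed
  moreover have "N' \<subseteq> {..<n}" by (auto simp: N'_def)
  ultimately show ?thesis by blast
qed

section \<open>Stability and public blocking profiles\<close>

definition has_profitable_deviation ::
    "nat \<Rightarrow> nat set set \<Rightarrow> (nat set \<Rightarrow> 'a \<Rightarrow> 'a prof \<Rightarrow> 'w::finite \<Rightarrow> real) \<Rightarrow> nat
      \<Rightarrow> 'a list \<Rightarrow> ('w \<Rightarrow> real) \<Rightarrow> bool" where
  "has_profitable_deviation n Ts u d x p \<longleftrightarrow>
     (\<exists>N' a'. N' \<noteq> {} \<and> N' \<subseteq> {..<n} \<and> card N' \<le> d \<and>
        (\<forall>i\<in>N'. type_util u (typ_of Ts i) (x ! i) (profile Ts x) p
               < type_util u (typ_of Ts i) (a' i) (profile Ts (upd x N' a')) p))"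

lemma unblocked_dev_if_has_profitable_deviation:
  fixes x :: "'a::finite list"
  assumes part: "is_partition n Ts" and len: "length x = n"
    and "has_profitable_deviation n Ts u d x p"
  shows "\<exists>\<delta>\<in>D_rho Ts d (profile Ts x). \<forall>T\<in>Ts. \<forall>a b. 0 < \<delta> T a b \<longrightarrow>
           type_util u T a (profile Ts x) p < type_util u T b (prof_plus (profile Ts x) \<delta>) p"
proof -
  obtain N' a' where "N' \<noteq> {}" and sub: "N' \<subseteq> {..<n}" and "card N' \<le> d"
    and gain: "\<forall>i\<in>N'. type_util u (typ_of Ts i) (x ! i) (profile Ts x) p
               < type_util u (typ_of Ts i) (a' i) (profile Ts (upd x N' a')) p"
    using assms(3) unfolding has_profitable_deviation_def by blast
  define N2 where "N2 = {i \<in> N'. a' i \<noteq> x ! i}"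
  have N2: "N2 \<subseteq> {..<n}" "\<forall>i\<in>N2. a' i \<noteq> x ! i"
    using sub by (auto simp: N2_def)
  have upd_N2: "upd x N' a' = upd x N2 a'"
    by (rule nth_equalityI) (auto simp: nth_upd N2_def)
  have "N2 \<noteq> {}"
  proof
    assume "N2 = {}"
    then have "upd x N' a' = x" and "\<forall>i\<in>N'. a' i = x ! i"
      using upd_N2 by (auto intro: nth_equalityI simp: nth_upd N2_def)
    then show False using gain \<open>N' \<noteq> {}\<close> by fastforce
  qed
  moreover have "card N2 \<le> d"
    using \<open>card N' \<le> d\<close> sub finite_subset[OF sub] card_mono[of N' N2]
    by (auto simp: N2_def)
  ultimately have \<delta>: "coalition_dev Ts x N2 a' \<in> D_rho Ts d (profile Ts x)"
    using coalition_dev_in_D_rho[OF part len N2] by blast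
  have prof: "profile Ts (upd x N' a') = prof_plus (profile Ts x) (coalition_dev Ts x N2 a')"
    unfolding upd_N2 by (rule profile_upd[OF part len])
  have "type_util u T a (profile Ts x) p
          < type_util u T b (prof_plus (profile Ts x) (coalition_dev Ts x N2 a')) p"
    if T: "T \<in> Ts" and pos: "0 < coalition_dev Ts x N2 a' T a b" for T a b
  proof -
    obtain i where i: "i \<in> N2" "i \<in> T" "x ! i = a" "a' i = b"
      using pos unfolding coalition_dev_pos_iff[OF part] by blast
    then have "typ_of Ts i = T" using typ_of_eq[OF part T] by blast
    then show ?thesis using gain i prof by (auto simp: N2_def)
  qed
  with \<delta> show ?thesis by blast
qed

lemma has_profitable_deviation_if_unblocked_dev:
  fixes x :: "'a::finite list"
  assumes part: "is_partition n Ts" and len: "length x = n"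
    and \<delta>: "\<delta> \<in> D_rho Ts d (profile Ts x)"
    and unblocked: "\<forall>T\<in>Ts. \<forall>a b. 0 < \<delta> T a b \<longrightarrow>
           type_util u T a (profile Ts x) p < type_util u T b (prof_plus (profile Ts x) \<delta>) p"
  shows "has_profitable_deviation n Ts u d x p"
proof -
  obtain N' a' where sub: "N' \<subseteq> {..<n}" and changes: "\<forall>i\<in>N'. a' i \<noteq> x ! i"
    and dev: "coalition_dev Ts x N' a' = \<delta>"
    using D_rho_realised_by_coalition[OF part len \<delta>] by blast
  have "card N' = dev_size Ts \<delta>"
    using dev_size_coalition_dev[OF part sub, of x a'] dev by simp
  with \<delta> have "N' \<noteq> {}" "card N' \<le> d"
    by (auto simp: D_rho_def D_star_def)
  moreover have "type_util u (typ_of Ts i) (x ! i) (profile Ts x) p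
               < type_util u (typ_of Ts i) (a' i) (profile Ts (upd x N' a')) p" if i: "i \<in> N'" for i
  proof -
    have T: "typ_of Ts i \<in> Ts" "i \<in> typ_of Ts i"
      using typ_of_mem[OF part] i sub by auto
    then have "0 < \<delta> (typ_of Ts i) (x ! i) (a' i)"
      unfolding dev[symmetric] coalition_dev_pos_iff[OF part] using i by blast
    then show ?thesis
      using unblocked T profile_upd[OF part len, of N' a'] dev by simp
  qed
  ultimately show ?thesis
    unfolding has_profitable_deviation_def using sub by blast
qed

lemma has_profitable_deviation_iff_unblocked_dev:
  fixes x :: "'a::finite list"
  assumes "is_partition n Ts" and "length x = n"
  shows "has_profitable_deviation n Ts u d x p \<longleftrightarrow>
    (\<exists>\<delta>\<in>D_rho Ts d (profile Ts x). \<forall>T\<in>Ts. \<forall>a b. 0 < \<delta> T a b \<longrightarrow>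
       type_util u T a (profile Ts x) p < type_util u T b (prof_plus (profile Ts x) \<delta>) p)"
  using unblocked_dev_if_has_profitable_deviation[OF assms]
    has_profitable_deviation_if_unblocked_dev[OF assms] by blast

lemma finite_joint: "finite (joint n :: 'a::finite list set)"
  using finite_lists_length_eq[of "UNIV :: 'a set" n] by (simp add: joint_def)

lemma post_pub_eq: "post_pub \<mu> \<sigma> s x \<omega> = (if x = fst s then post_world \<mu> \<sigma> s \<omega> else 0)"
proof -
  have "{s'. fst s' = x \<and> s' = s} = (if x = fst s then {s} else {})" by auto
  then show ?thesis
    unfolding post_pub_def post_world_def by (simp add: measure_pmf_single)
qed

lemma type_util_gain:
  assumes "i \<in> N'" and "i < length x"
  shows "(\<Sum>\<omega>\<in>UNIV. p \<omega> * (agent_util Ts u (upd x N' a') i \<omega> - agent_util Ts u x i \<omega>))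
     = type_util u (typ_of Ts i) (a' i) (profile Ts (upd x N' a')) p
       - type_util u (typ_of Ts i) (x ! i) (profile Ts x) p"
  using assms unfolding agent_util_def type_util_def
  by (simp add: nth_upd right_diff_distrib sum_subtractf)

lemma unstable_pub_iff_has_profitable_deviation:
  fixes s :: "'a::finite list \<times> 'g"
  assumes "fst s \<in> joint n"
  shows "unstable_pub n Ts u \<mu> d \<sigma> s \<longleftrightarrow> has_profitable_deviation n Ts u d (fst s) (post_world \<mu> \<sigma> s)"
proof -
  have expectation: "(\<Sum>x\<in>joint n. \<Sum>\<omega>\<in>UNIV. post_pub \<mu> \<sigma> s x \<omega> * f x \<omega>)
      = (\<Sum>\<omega>\<in>UNIV. post_world \<mu> \<sigma> s \<omega> * f (fst s) \<omega>)" for f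
  proof -
    have "(\<Sum>x\<in>joint n. \<Sum>\<omega>\<in>UNIV. post_pub \<mu> \<sigma> s x \<omega> * f x \<omega>)
        = (\<Sum>x\<in>joint n. if x = fst s then \<Sum>\<omega>\<in>UNIV. post_world \<mu> \<sigma> s \<omega> * f x \<omega> else 0)"
      by (intro sum.cong refl) (simp add: post_pub_eq)
    then show ?thesis using assms by (simp add: finite_joint)
  qed
  have len: "length (fst s) = n" using assms by (simp add: joint_def)
  have gain: "0 < (\<Sum>\<omega>\<in>UNIV. post_world \<mu> \<sigma> s \<omega> *
                  (agent_util Ts u (upd (fst s) N' a') i \<omega> - agent_util Ts u (fst s) i \<omega>))
      \<longleftrightarrow> type_util u (typ_of Ts i) (fst s ! i) (profile Ts (fst s)) (post_world \<mu> \<sigma> s)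
          < type_util u (typ_of Ts i) (a' i) (profile Ts (upd (fst s) N' a')) (post_world \<mu> \<sigma> s)"
    if "N' \<subseteq> {..<n}" "i \<in> N'" for N' a' i
    using that len by (subst type_util_gain) auto
  show ?thesis
    unfolding unstable_pub_def has_profitable_deviation_def expectation
    using gain by blast
qed

lemma blocking_pub_mem:
  "(\<delta>, T, a, b) \<in> blocking_pub Ts u \<mu> d \<sigma> s \<longleftrightarrow>
    \<delta> \<in> D_rho Ts d (profile Ts (fst s)) \<and> T \<in> Ts \<and> 0 < \<delta> T a b \<and>
    type_util u T b (prof_plus (profile Ts (fst s)) \<delta>) (post_world \<mu> \<sigma> s)
      \<le> type_util u T a (profile Ts (fst s)) (post_world \<mu> \<sigma> s)"
  unfolding blocking_pub_def Let_def by simp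

lemma blocking_pub_in_B_pub_iff:
  "blocking_pub Ts u \<mu> d \<sigma> s \<in> B_pub Ts d (profile Ts (fst s)) \<longleftrightarrow>
    (\<forall>\<delta>\<in>D_rho Ts d (profile Ts (fst s)). \<exists>T\<in>Ts. \<exists>a b. 0 < \<delta> T a b \<and>
       type_util u T b (prof_plus (profile Ts (fst s)) \<delta>) (post_world \<mu> \<sigma> s)
         \<le> type_util u T a (profile Ts (fst s)) (post_world \<mu> \<sigma> s))"
proof -
  let ?\<beta> = "blocking_pub Ts u \<mu> d \<sigma> s"
  have "?\<beta> \<subseteq> D_rho Ts d (profile Ts (fst s)) \<times> Ts \<times> UNIV \<times> UNIV"
    and "\<forall>(\<delta>, T, a, a')\<in>?\<beta>. 0 < \<delta> T a a'"
    by (auto simp: blocking_pub_mem)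
  then have "?\<beta> \<in> B_pub Ts d (profile Ts (fst s))
      \<longleftrightarrow> (\<forall>\<delta>\<in>D_rho Ts d (profile Ts (fst s)). \<exists>T a b. (\<delta>, T, a, b) \<in> ?\<beta>)"
    unfolding B_pub_def by force
  then show ?thesis by (simp add: blocking_pub_mem Bex_def)
qed

lemma not_unstable_pub_iff_blocking_pub_in_B_pub:
  fixes s :: "'a::finite list \<times> 'g"
  assumes "is_partition n Ts" and "fst s \<in> joint n"
  shows "\<not> unstable_pub n Ts u \<mu> d \<sigma> s \<longleftrightarrow> blocking_pub Ts u \<mu> d \<sigma> s \<in> B_pub Ts d (profile Ts (fst s))"
proof -
  have "length (fst s) = n" using assms(2) by (simp add: joint_def)
  then show ?thesis
    unfolding unstable_pub_iff_has_profitable_deviation[OF assms(2)] blocking_pub_in_B_pub_iff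
      has_profitable_deviation_iff_unblocked_dev[OF assms(1) \<open>length (fst s) = n\<close>]
    by (auto simp: not_less)
qed

lemma sig_prob_nonneg: "0 \<le> sig_prob \<mu> \<sigma> s"
  unfolding sig_prob_def by (intro sum_nonneg) simp

lemma stable_pub_policy_not_unstable:
  assumes "stable_pub_policy n Ts u \<mu> d \<sigma>"
  shows "\<not> unstable_pub n Ts u \<mu> d \<sigma> s"
proof (cases "sig_prob \<mu> \<sigma> s = 0")
  case True
  \<comment> \<open>the posterior divides by \<open>sig_prob\<close>, so it is identically 0 and no deviation gains\<close>
  then show ?thesis by (simp add: unstable_pub_def post_pub_def)
next
  case False
  then have "0 < sig_prob \<mu> \<sigma> s"
    using sig_prob_nonneg[of \<mu> \<sigma> s] by simp
  with assms show ?thesis unfolding stable_pub_policy_def by blast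
qed

section \<open>Merging meta-signals\<close>

lemma pmf_map_pmf_eq_sum:
  assumes "finite S" and "\<And>s. s \<in> set_pmf M \<Longrightarrow> f s = c \<Longrightarrow> s \<in> S" and "\<And>s. s \<in> S \<Longrightarrow> f s = c"
  shows "pmf (map_pmf f M) c = (\<Sum>s\<in>S. pmf M s)"
proof -
  have "pmf (map_pmf f M) c = measure_pmf.prob M (f -` {c} \<inter> set_pmf M)"
    by (simp add: pmf_map measure_Int_set_pmf)
  also have "f -` {c} \<inter> set_pmf M = S \<inter> set_pmf M"
    using assms(2,3) by auto
  also have "measure_pmf.prob M (S \<inter> set_pmf M) = (\<Sum>s\<in>S. pmf M s)"
    by (simp add: measure_Int_set_pmf measure_measure_pmf_finite[OF assms(1)])
  finally show ?thesis .
qed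

lemma sum_set_pmf_map_pmf:
  fixes g :: "'b \<Rightarrow> real"
  assumes "finite (set_pmf M)"
  shows "(\<Sum>y\<in>set_pmf (map_pmf f M). pmf (map_pmf f M) y * g y) = (\<Sum>x\<in>set_pmf M. pmf M x * g (f x))"
proof -
  have "(\<Sum>y\<in>set_pmf (map_pmf f M). pmf (map_pmf f M) y * g y) = measure_pmf.expectation (map_pmf f M) g"
    using assms by (subst integral_measure_pmf_real[of "set_pmf (map_pmf f M)"]) (auto simp: mult.commute)
  also have "\<dots> = measure_pmf.expectation M (\<lambda>x. g (f x))"
    by simp
  also have "\<dots> = (\<Sum>x\<in>set_pmf M. pmf M x * g (f x))"
    using assms by (subst integral_measure_pmf_real[of "set_pmf M"]) (auto simp: mult.commute)
  finally show ?thesis .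
qed

lemma sig_prob_mult_post_world:
  "sig_prob \<mu> \<sigma> s * (\<Sum>\<omega>\<in>UNIV. post_world \<mu> \<sigma> s \<omega> * h \<omega>) = (\<Sum>\<omega>\<in>UNIV. pmf \<mu> \<omega> * pmf (\<sigma> \<omega>) s * h \<omega>)"
proof (cases "sig_prob \<mu> \<sigma> s = 0")
  case True
  then have "\<forall>\<omega>\<in>UNIV. pmf \<mu> \<omega> * pmf (\<sigma> \<omega>) s = 0"
    unfolding sig_prob_def by (subst (asm) sum_nonneg_eq_0_iff) auto
  then have "(\<Sum>\<omega>\<in>UNIV. pmf \<mu> \<omega> * pmf (\<sigma> \<omega>) s * h \<omega>) = 0"
    by (intro sum.neutral) auto
  with True show ?thesis by simp
next
  case False
  then show ?thesis unfolding post_world_def by (simp add: sum_distrib_left)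
qed

lemma sig_prob_pos_imp_mem_set_pmf:
  assumes "0 < sig_prob \<mu> \<sigma> s"
  shows "\<exists>\<omega>. s \<in> set_pmf (\<sigma> \<omega>)"
proof (rule ccontr)
  assume "\<nexists>\<omega>. s \<in> set_pmf (\<sigma> \<omega>)"
  then have "\<forall>\<omega>. pmf (\<sigma> \<omega>) s = 0" by (simp add: set_pmf_iff)
  with assms show False by (simp add: sig_prob_def)
qed

lemma sum_mult_nonneg_iff_uniform_sign:
  fixes w e :: "'s \<Rightarrow> real"
  assumes "finite S" and w: "\<And>s. s \<in> S \<Longrightarrow> 0 \<le> w s" and "s1 \<in> S" "0 < w s1"
    and sign: "\<And>s. s \<in> S \<Longrightarrow> 0 \<le> e s \<longleftrightarrow> P"
  shows "0 \<le> (\<Sum>s\<in>S. w s * e s) \<longleftrightarrow> P"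
proof (cases P)
  case True
  then show ?thesis using w sign by (simp add: sum_nonneg)
next
  case False
  then have neg: "e s < 0" if "s \<in> S" for s using sign[OF that] by simp
  have "(\<Sum>s\<in>S. w s * e s) = w s1 * e s1 + (\<Sum>s\<in>S - {s1}. w s * e s)"
    by (rule sum.remove[OF assms(1,3)])
  also have "\<dots> < 0"
    using neg w \<open>s1 \<in> S\<close> \<open>0 < w s1\<close>
    by (intro add_neg_nonpos mult_pos_neg sum_nonpos mult_nonneg_nonpos) (auto intro: less_imp_le)
  finally show ?thesis using False by simp
qed

lemma blocking_pub_mem_iff_expectation:
  "(\<delta>, T, a, b) \<in> blocking_pub Ts u \<mu> d \<sigma> s \<longleftrightarrow>
    \<delta> \<in> D_rho Ts d (profile Ts (fst s)) \<and> T \<in> Ts \<and> 0 < \<delta> T a b \<and>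
    0 \<le> (\<Sum>\<omega>\<in>UNIV. post_world \<mu> \<sigma> s \<omega> *
           (u T a (profile Ts (fst s)) \<omega> - u T b (prof_plus (profile Ts (fst s)) \<delta>) \<omega>))"
  unfolding blocking_pub_mem type_util_def by (simp add: right_diff_distrib sum_subtractf)

lemma blocking_pub_map_pmf:
  fixes \<sigma> :: "'w::finite \<Rightarrow> ('a::finite list \<times> 'g) pmf" and f :: "'a list \<times> 'g \<Rightarrow> 'a list \<times> 'h"
  assumes fin: "\<And>\<omega>. finite (set_pmf (\<sigma> \<omega>))"
    and pos: "0 < sig_prob \<mu> (\<lambda>\<omega>. map_pmf f (\<sigma> \<omega>)) c"
    and fibre: "\<And>\<omega> s. s \<in> set_pmf (\<sigma> \<omega>) \<Longrightarrow> f s = c \<Longrightarrow>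
                  profile Ts (fst s) = profile Ts (fst c) \<and> blocking_pub Ts u \<mu> d \<sigma> s = \<beta>"
  shows "blocking_pub Ts u \<mu> d (\<lambda>\<omega>. map_pmf f (\<sigma> \<omega>)) c = \<beta>"
proof -
  define \<sigma>' where "\<sigma>' = (\<lambda>\<omega>. map_pmf f (\<sigma> \<omega>))"
  define S where "S = {s \<in> (\<Union>\<omega>. set_pmf (\<sigma> \<omega>)). f s = c}"
  have "finite (\<Union>\<omega>. set_pmf (\<sigma> \<omega>))" using fin by simp
  then have "finite S" unfolding S_def by (rule finite_subset[rotated]) auto
  have pmf_c: "pmf (\<sigma>' \<omega>) c = (\<Sum>s\<in>S. pmf (\<sigma> \<omega>) s)" for \<omega>
    unfolding \<sigma>'_def by (rule pmf_map_pmf_eq_sum[OF \<open>finite S\<close>]) (auto simp: S_def)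
  have mix: "sig_prob \<mu> \<sigma>' c * (\<Sum>\<omega>\<in>UNIV. post_world \<mu> \<sigma>' c \<omega> * h \<omega>)
      = (\<Sum>s\<in>S. sig_prob \<mu> \<sigma> s * (\<Sum>\<omega>\<in>UNIV. post_world \<mu> \<sigma> s \<omega> * h \<omega>))" for h
    unfolding sig_prob_mult_post_world pmf_c
    by (simp add: sum_distrib_left sum_distrib_right sum.swap[of _ S] mult.assoc)
  have "sig_prob \<mu> \<sigma>' c = (\<Sum>s\<in>S. sig_prob \<mu> \<sigma> s)"
    unfolding sig_prob_def pmf_c by (simp add: sum_distrib_left sum.swap[of _ UNIV])
  then obtain s1 where "s1 \<in> S" "0 < sig_prob \<mu> \<sigma> s1"
    using pos sum_nonpos[of S "sig_prob \<mu> \<sigma>"] unfolding \<sigma>'_def by (metis not_le)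
  have "(\<delta>, T, a, b) \<in> blocking_pub Ts u \<mu> d \<sigma>' c \<longleftrightarrow> (\<delta>, T, a, b) \<in> \<beta>" for \<delta> T a b
  proof -
    define E where "E = (\<lambda>p. \<Sum>\<omega>\<in>UNIV. p \<omega> *
           (u T a (profile Ts (fst c)) \<omega> - u T b (prof_plus (profile Ts (fst c)) \<delta>) \<omega>))"
    let ?cond = "\<delta> \<in> D_rho Ts d (profile Ts (fst c)) \<and> T \<in> Ts \<and> 0 < \<delta> T a b"
    have in_\<beta>: "(\<delta>, T, a, b) \<in> \<beta> \<longleftrightarrow> ?cond \<and> 0 \<le> E (post_world \<mu> \<sigma> s)" if s: "s \<in> S" for s
    proof -
      obtain \<omega> where "s \<in> set_pmf (\<sigma> \<omega>)" "f s = c" using s by (auto simp: S_def)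
      then have "profile Ts (fst s) = profile Ts (fst c)" "blocking_pub Ts u \<mu> d \<sigma> s = \<beta>"
        using fibre by blast+
      then show ?thesis
        using blocking_pub_mem_iff_expectation[of \<delta> T a b Ts u \<mu> d \<sigma> s] unfolding E_def by simp
    qed
    have "(\<delta>, T, a, b) \<in> blocking_pub Ts u \<mu> d \<sigma>' c \<longleftrightarrow> ?cond \<and> 0 \<le> E (post_world \<mu> \<sigma>' c)"
      unfolding blocking_pub_mem_iff_expectation E_def by simp
    also have "\<dots> \<longleftrightarrow> ?cond \<and> 0 \<le> sig_prob \<mu> \<sigma>' c * E (post_world \<mu> \<sigma>' c)"
      using pos unfolding \<sigma>'_def by (simp add: zero_le_mult_iff)
    also have "\<dots> \<longleftrightarrow> (\<delta>, T, a, b) \<in> \<beta>"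
    proof (cases ?cond)
      case True
      have "sig_prob \<mu> \<sigma>' c * E (post_world \<mu> \<sigma>' c) = (\<Sum>s\<in>S. sig_prob \<mu> \<sigma> s * E (post_world \<mu> \<sigma> s))"
        unfolding E_def by (rule mix)
      moreover have "0 \<le> (\<Sum>s\<in>S. sig_prob \<mu> \<sigma> s * E (post_world \<mu> \<sigma> s)) \<longleftrightarrow> (\<delta>, T, a, b) \<in> \<beta>"
        by (rule sum_mult_nonneg_iff_uniform_sign[where w = "sig_prob \<mu> \<sigma>", OF \<open>finite S\<close> sig_prob_nonneg
              \<open>s1 \<in> S\<close> \<open>0 < sig_prob \<mu> \<sigma> s1\<close>]) (use in_\<beta> True in auto)
      ultimately show ?thesis using True by simp
    qed (use in_\<beta>[OF \<open>s1 \<in> S\<close>] in auto)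
    finally show ?thesis .
  qed
  then show ?thesis unfolding \<sigma>'_def by auto
qed

lemma principal_util_map_pmf:
  assumes fin: "\<And>\<omega>. finite (set_pmf (\<sigma> \<omega>))"
    and prof: "\<And>\<omega> s. s \<in> set_pmf (\<sigma> \<omega>) \<Longrightarrow> profile Ts (fst (f s)) = profile Ts (fst s)"
  shows "principal_util Ts u0 \<mu> (\<lambda>\<omega>. map_pmf f (\<sigma> \<omega>)) = principal_util Ts u0 \<mu> \<sigma>"
proof -
  have "(\<Sum>y\<in>set_pmf (map_pmf f (\<sigma> \<omega>)). pmf (map_pmf f (\<sigma> \<omega>)) y * u0 (profile Ts (fst y)) \<omega>)
      = (\<Sum>s\<in>set_pmf (\<sigma> \<omega>). pmf (\<sigma> \<omega>) s * u0 (profile Ts (fst (f s))) \<omega>)" for \<omega>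
    by (rule sum_set_pmf_map_pmf[OF fin])
  also have "\<dots> \<omega> = (\<Sum>s\<in>set_pmf (\<sigma> \<omega>). pmf (\<sigma> \<omega>) s * u0 (profile Ts (fst s)) \<omega>)" for \<omega>
    using prof by (intro sum.cong) auto
  finally show ?thesis by (simp only: principal_util_def)
qed

lemma is_policy_map_pmf:
  "is_policy n \<sigma> \<Longrightarrow> (\<And>\<omega> s. s \<in> set_pmf (\<sigma> \<omega>) \<Longrightarrow> fst (f s) \<in> joint n) \<Longrightarrow>
    is_policy n (\<lambda>\<omega>. map_pmf f (\<sigma> \<omega>))"
  unfolding is_policy_def by auto

lemma rep_of_mem:
  assumes "is_rep_set n Ts Abar" and "xs \<in> joint n"
  shows "rep_of Ts Abar xs \<in> Abar \<and> profile Ts (rep_of Ts Abar xs) = profile Ts xs"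
  unfolding rep_of_def by (rule theI') (use assms in \<open>simp add: is_rep_set_def\<close>)

lemma rep_of_idem:
  assumes "is_rep_set n Ts Abar" and "ab \<in> Abar"
  shows "rep_of Ts Abar ab = ab"
proof -
  have "ab \<in> joint n" using assms by (auto simp: is_rep_set_def)
  then show ?thesis
    using assms rep_of_mem[OF assms(1)] unfolding is_rep_set_def by (metis (mono_tags, lifting))
qed

section \<open>The signature policy\<close>

definition signature_policy ::
    "nat set set \<Rightarrow> (nat set \<Rightarrow> 'a::finite \<Rightarrow> 'a prof \<Rightarrow> 'w \<Rightarrow> real) \<Rightarrow> 'w::finite pmf \<Rightarrow> nat
      \<Rightarrow> 'a list set \<Rightarrow> ('w \<Rightarrow> ('a list \<times> 'g) pmf)
      \<Rightarrow> 'w \<Rightarrow> ('a list \<times> ('a dev \<times> nat set \<times> 'a \<times> 'a) set) pmf" where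
  "signature_policy Ts u \<mu> d Abar \<sigma> = (\<lambda>\<omega>. map_pmf (signature_pub Ts u \<mu> d Abar \<sigma>) (\<sigma> \<omega>))"

context
  fixes n d :: nat and Ts :: "nat set set" and \<mu> :: "'w::finite pmf"
    and u :: "nat set \<Rightarrow> 'a::finite \<Rightarrow> 'a prof \<Rightarrow> 'w \<Rightarrow> real"
    and Abar :: "'a list set" and \<sigma> :: "'w \<Rightarrow> ('a list \<times> 'g) pmf"
  assumes part: "is_partition n Ts"
    and rep: "is_rep_set n Ts Abar"
    and stable: "stable_pub_policy n Ts u \<mu> d \<sigma>"
begin

lemma signature_pub_mem_C_set:
  assumes "s \<in> set_pmf (\<sigma> \<omega>)"
  shows "signature_pub Ts u \<mu> d Abar \<sigma> s \<in> C_set Ts d Abar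
    \<and> profile Ts (fst (signature_pub Ts u \<mu> d Abar \<sigma> s)) = profile Ts (fst s)"
proof -
  have "fst s \<in> joint n"
    using stable assms by (auto simp: stable_pub_policy_def is_policy_def)
  then have "blocking_pub Ts u \<mu> d \<sigma> s \<in> B_pub Ts d (profile Ts (fst s))"
    using not_unstable_pub_iff_blocking_pub_in_B_pub[OF part] stable_pub_policy_not_unstable[OF stable]
    by blast
  with rep_of_mem[OF rep \<open>fst s \<in> joint n\<close>] show ?thesis
    by (simp add: signature_pub_def C_set_def)
qed

lemma set_pmf_signature_policy: "set_pmf (signature_policy Ts u \<mu> d Abar \<sigma> \<omega>) \<subseteq> C_set Ts d Abar"
  using signature_pub_mem_C_set by (auto simp: signature_policy_def)

lemma principal_util_signature_policy:
  "principal_util Ts u0 \<mu> (signature_policy Ts u \<mu> d Abar \<sigma>) = principal_util Ts u0 \<mu> \<sigma>"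
  unfolding signature_policy_def
  using stable signature_pub_mem_C_set
  by (intro principal_util_map_pmf) (auto simp: stable_pub_policy_def is_policy_def)

lemma signature_pub_signature_policy:
  assumes pos: "0 < sig_prob \<mu> (signature_policy Ts u \<mu> d Abar \<sigma>) c"
  shows "signature_pub Ts u \<mu> d Abar (signature_policy Ts u \<mu> d Abar \<sigma>) c = c"
proof -
  have "c \<in> C_set Ts d Abar"
    using sig_prob_pos_imp_mem_set_pmf[OF pos] set_pmf_signature_policy by blast
  then have "fst c \<in> Abar" by (auto simp: C_set_def)
  have "blocking_pub Ts u \<mu> d (signature_policy Ts u \<mu> d Abar \<sigma>) c = snd c"
    unfolding signature_policy_def
  proof (rule blocking_pub_map_pmf)
    show "finite (set_pmf (\<sigma> \<omega>))" for \<omega>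
      using stable by (simp add: stable_pub_policy_def is_policy_def)
    show "0 < sig_prob \<mu> (\<lambda>\<omega>. map_pmf (signature_pub Ts u \<mu> d Abar \<sigma>) (\<sigma> \<omega>)) c"
      using pos by (simp add: signature_policy_def)
    show "profile Ts (fst s) = profile Ts (fst c) \<and> blocking_pub Ts u \<mu> d \<sigma> s = snd c"
      if "s \<in> set_pmf (\<sigma> \<omega>)" "signature_pub Ts u \<mu> d Abar \<sigma> s = c" for \<omega> s
      using signature_pub_mem_C_set[OF that(1)] that(2) by (auto simp: signature_pub_def)
  qed
  then show ?thesis
    using rep_of_idem[OF rep \<open>fst c \<in> Abar\<close>] by (simp add: signature_pub_def)
qed

lemma stable_pub_policy_signature_policy:
  "stable_pub_policy n Ts u \<mu> d (signature_policy Ts u \<mu> d Abar \<sigma>)"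
  unfolding stable_pub_policy_def
proof (intro conjI allI impI)
  have "fst c \<in> joint n" if "c \<in> C_set Ts d Abar" for c
    using that rep by (auto simp: C_set_def is_rep_set_def)
  then show "is_policy n (signature_policy Ts u \<mu> d Abar \<sigma>)"
    unfolding signature_policy_def using stable signature_pub_mem_C_set
    by (intro is_policy_map_pmf) (auto simp: stable_pub_policy_def)
next
  fix c
  assume pos: "0 < sig_prob \<mu> (signature_policy Ts u \<mu> d Abar \<sigma>) c"
  have "c \<in> C_set Ts d Abar"
    using sig_prob_pos_imp_mem_set_pmf[OF pos] set_pmf_signature_policy by blast
  then have joint: "fst c \<in> joint n" and "snd c \<in> B_pub Ts d (profile Ts (fst c))"
    using rep by (auto simp: C_set_def is_rep_set_def)
  moreover have "blocking_pub Ts u \<mu> d (signature_policy Ts u \<mu> d Abar \<sigma>) c = snd c"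
    using signature_pub_signature_policy[OF pos] by (simp add: signature_pub_def prod_eq_iff)
  ultimately show "\<not> unstable_pub n Ts u \<mu> d (signature_policy Ts u \<mu> d Abar \<sigma>) c"
    using not_unstable_pub_iff_blocking_pub_in_B_pub[OF part joint] by metis
qed

end

theorem theorem1:
  fixes n d :: nat
    and Ts :: "nat set set"
    and \<mu> :: "'w::finite pmf"
    and u :: "nat set \<Rightarrow> 'a::finite \<Rightarrow> 'a prof \<Rightarrow> 'w \<Rightarrow> real"
    and u0 :: "'a prof \<Rightarrow> 'w \<Rightarrow> real"
    and Abar :: "'a list set"
    and \<sigma> :: "'w \<Rightarrow> ('a list \<times> 'g) pmf"
  assumes "is_partition n Ts"
    and "d \<ge> 1"
    and "is_rep_set n Ts Abar"
    and "stable_pub_policy n Ts u \<mu> d \<sigma>"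
  shows "\<exists>\<sigma>b :: 'w \<Rightarrow> ('a list \<times> ('a dev \<times> nat set \<times> 'a \<times> 'a) set) pmf.
           stable_pub_policy n Ts u \<mu> d \<sigma>b
         \<and> (\<forall>\<omega>. set_pmf (\<sigma>b \<omega>) \<subseteq> C_set Ts d Abar)
         \<and> principal_util Ts u0 \<mu> \<sigma>b \<ge> principal_util Ts u0 \<mu> \<sigma>
         \<and> (\<forall>c\<in>C_set Ts d Abar. sig_prob \<mu> \<sigma>b c > 0 \<longrightarrow> signature_pub Ts u \<mu> d Abar \<sigma>b c = c)"
proof (intro exI conjI allI ballI impI)
  note facts = assms(1,3,4)
  show "stable_pub_policy n Ts u \<mu> d (signature_policy Ts u \<mu> d Abar \<sigma>)"
    by (rule stable_pub_policy_signature_policy[OF facts])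
  show "set_pmf (signature_policy Ts u \<mu> d Abar \<sigma> \<omega>) \<subseteq> C_set Ts d Abar" for \<omega>
    by (rule set_pmf_signature_policy[OF facts])
  show "principal_util Ts u0 \<mu> (signature_policy Ts u \<mu> d Abar \<sigma>) \<ge> principal_util Ts u0 \<mu> \<sigma>"
    using principal_util_signature_policy[OF facts] by simp
  show "signature_pub Ts u \<mu> d Abar (signature_policy Ts u \<mu> d Abar \<sigma>) c = c"
    if "0 < sig_prob \<mu> (signature_policy Ts u \<mu> d Abar \<sigma>) c" for c
    by (rule signature_pub_signature_policy[OF facts that])
qed

end
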